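(* Let $K$ be a field, $n>0$, $B=K[x_1,\dots,x_n]$, and $\varphi:B\to B$ a $K$-algebra homomorphism. Let $d,r\in\mathbb{N}$ with $r>0$ and $h_1,\dots,h_r\in B_{\le d}$. Let $m>n+d$ be an integer and suppose there is no nontrivial relation $\varphi(b_1)h_1+\dots+\varphi(b_r)h_r=0$ with $b_1,\dots,b_r\in B_{\le m}$ not all zero. Then $m\,(r-\deg(\varphi)^n)<2^n\deg(\varphi)^{n-1}(n+d)$.
   Context: $\deg(\varphi)=\max\{\deg\varphi(x_1),\dots,\deg\varphi(x_n)\}$ with $\deg$ the total degree; $B_{\le d}$ is the $K$-subspace of polynomials of total degree $\le d$. *)

theory Defs
  imports Main "HOL-Library.Poly_Mapping"
begin

text \<open>Multivariate polynomials over a field K: finitely supported maps from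
monomials (finitely supported exponent vectors) to coefficients, with the
convolution product from Poly_Mapping.\<close>

type_synonym 'a mpoly = "(nat \<Rightarrow>\<^sub>0 nat) \<Rightarrow>\<^sub>0 'a"

text \<open>B = K[x_0,...,x_{n-1}]: polynomials involving only the first n variables.\<close>
definition polys_in :: "nat \<Rightarrow> ('a::zero) mpoly set" where
  "polys_in n = {p. \<forall>mo \<in> Poly_Mapping.keys p. Poly_Mapping.keys mo \<subseteq> {..<n}}"

definition mon_deg :: "(nat \<Rightarrow>\<^sub>0 nat) \<Rightarrow> nat" where
  "mon_deg mo = (\<Sum>i \<in> Poly_Mapping.keys mo. Poly_Mapping.lookup mo i)"

text \<open>Total degree (the zero polynomial gets degree 0).\<close>
definition tdeg :: "('a::zero) mpoly \<Rightarrow> nat" where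
  "tdeg p = Max (insert 0 (mon_deg ` Poly_Mapping.keys p))"

definition polys_le :: "nat \<Rightarrow> nat \<Rightarrow> ('a::zero) mpoly set" where
  "polys_le n d = {p \<in> polys_in n. tdeg p \<le> d}"

definition const_poly :: "'a::zero \<Rightarrow> 'a mpoly" where
  "const_poly c = Poly_Mapping.single 0 c"

definition Var :: "nat \<Rightarrow> ('a::{zero,one}) mpoly" where
  "Var i = Poly_Mapping.single (Poly_Mapping.single i 1) 1"

definition is_alg_endo :: "nat \<Rightarrow> (('a::field) mpoly \<Rightarrow> 'a mpoly) \<Rightarrow> bool" where
  "is_alg_endo n \<phi> \<longleftrightarrow>
     (\<forall>p \<in> polys_in n. \<phi> p \<in> polys_in n) \<and>
     (\<forall>p \<in> polys_in n. \<forall>q \<in> polys_in n. \<phi> (p + q) = \<phi> p + \<phi> q) \<and>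
     (\<forall>p \<in> polys_in n. \<forall>q \<in> polys_in n. \<phi> (p * q) = \<phi> p * \<phi> q) \<and>
     (\<forall>c. \<phi> (const_poly c) = const_poly c)"

definition endo_deg :: "nat \<Rightarrow> (('a::field) mpoly \<Rightarrow> 'a mpoly) \<Rightarrow> nat" where
  "endo_deg n \<phi> = Max (insert 0 ((\<lambda>i. tdeg (\<phi> (Var i))) ` {..<n}))"

end

theory Submission
  imports Defs Complex_Main "HOL-Library.Multiset"
begin

text \<open>
  Write D = deg \<phi> and N = D m + d. The map (b_1, ..., b_r) \<mapsto> \<Sum> \<phi>(b_i) h_i is K-linear
  from (B_{\<le>m})^r to B_{\<le>N}, and injective by hypothesis, so comparing dimensions gives
  r (m+n choose n) \<le> (N+n choose n). Since (N+n choose n) / (m+n choose n) \<le> ((N+n)/m)^n,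
  this yields r \<le> (D + s)^n with s = (n+d)/m < 1, and expanding the binomial,
  (D + s)^n \<le> D^n + s D^{n-1} (2^n - 1) gives the claim.
\<close>

lemma mon_deg_eq_sum:
  assumes "finite S" "Poly_Mapping.keys mo \<subseteq> S"
  shows "mon_deg mo = (\<Sum>i\<in>S. Poly_Mapping.lookup mo i)"
  unfolding mon_deg_def using assms
  by (intro sum.mono_neutral_left) (auto simp: in_keys_iff)

lemma mon_deg_add: "mon_deg (a + b) = mon_deg a + mon_deg b"
proof -
  let ?S = "Poly_Mapping.keys a \<union> Poly_Mapping.keys b"
  have "mon_deg (a + b) = (\<Sum>i\<in>?S. Poly_Mapping.lookup (a + b) i)"
    using keys_add[of a b] by (intro mon_deg_eq_sum) auto
  also have "\<dots> = (\<Sum>i\<in>?S. Poly_Mapping.lookup a i) + (\<Sum>i\<in>?S. Poly_Mapping.lookup b i)"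
    by (simp add: lookup_add sum.distrib)
  also have "\<dots> = mon_deg a + mon_deg b"
    using mon_deg_eq_sum[of ?S a] mon_deg_eq_sum[of ?S b] by simp
  finally show ?thesis .
qed

lemma mon_deg_single: "mon_deg (Poly_Mapping.single i k) = k"
  by (simp add: mon_deg_def)

lemma mon_deg_eq_0_iff: "mon_deg mo = 0 \<longleftrightarrow> mo = 0"
  unfolding mon_deg_def keys_eq_empty[symmetric] by (auto simp: in_keys_iff intro: poly_mapping_eqI)

lemma monomial_induct [case_names zero add_var]:
  fixes mo :: "nat \<Rightarrow>\<^sub>0 nat"
  assumes "P 0" and "\<And>mo i. P mo \<Longrightarrow> P (mo + Poly_Mapping.single i 1)"
  shows "P mo"
proof (induction "mon_deg mo" arbitrary: mo)
  case 0
  then show ?case using assms(1) by (simp add: mon_deg_eq_0_iff)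
next
  case (Suc k)
  then have "mo \<noteq> 0" by (auto simp: mon_deg_def)
  then obtain i where "i \<in> Poly_Mapping.keys mo"
    by (simp flip: keys_eq_empty) blast
  define mo' where "mo' = mo - Poly_Mapping.single i 1"
  have mo: "mo = mo' + Poly_Mapping.single i 1"
    using \<open>i \<in> Poly_Mapping.keys mo\<close>
    by (intro poly_mapping_eqI) (auto simp: mo'_def lookup_add lookup_minus lookup_single when_def in_keys_iff)
  then have "k = mon_deg mo'"
    using Suc.hyps(2) mon_deg_add[of mo' "Poly_Mapping.single i 1"] by (simp add: mon_deg_single)
  then have "P mo'" by (rule Suc.hyps(1))
  then show ?case by (subst mo) (rule assms(2))
qed

lemma tdeg_le_iff: "tdeg p \<le> k \<longleftrightarrow> (\<forall>mo\<in>Poly_Mapping.keys p. mon_deg mo \<le> k)"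
  unfolding tdeg_def by (subst Max_le_iff) auto

lemma tdeg_mult_le: "tdeg (p * q) \<le> tdeg p + tdeg q"
  unfolding tdeg_le_iff
proof
  fix mo assume "mo \<in> Poly_Mapping.keys (p * q)"
  then obtain a b where "mo = a + b" "a \<in> Poly_Mapping.keys p" "b \<in> Poly_Mapping.keys q"
    using keys_mult by blast
  moreover have "mon_deg a \<le> tdeg p" if "a \<in> Poly_Mapping.keys p" for a
    using that tdeg_le_iff[of p "tdeg p"] by simp
  moreover have "mon_deg b \<le> tdeg q" if "b \<in> Poly_Mapping.keys q" for b
    using that tdeg_le_iff[of q "tdeg q"] by simp
  ultimately show "mon_deg mo \<le> tdeg p + tdeg q"
    by (simp add: mon_deg_add add_mono)
qed

lemma polys_in_mult:
  assumes "p \<in> polys_in n" "q \<in> polys_in n"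
  shows "p * q \<in> polys_in n"
  unfolding polys_in_def
proof (intro CollectI ballI subsetI)
  fix mo i assume "mo \<in> Poly_Mapping.keys (p * q)" "i \<in> Poly_Mapping.keys mo"
  moreover obtain a b where "mo = a + b" "a \<in> Poly_Mapping.keys p" "b \<in> Poly_Mapping.keys q"
    using keys_mult \<open>mo \<in> Poly_Mapping.keys (p * q)\<close> by blast
  ultimately show "i \<in> {..<n}"
    using assms keys_add[of a b] unfolding polys_in_def by blast
qed

lemma polys_in_add: "p \<in> polys_in n \<Longrightarrow> q \<in> polys_in n \<Longrightarrow> p + q \<in> polys_in n"
  unfolding polys_in_def using keys_add[of p q] by blast

lemma polys_in_sum: "(\<And>x. x \<in> S \<Longrightarrow> f x \<in> polys_in n) \<Longrightarrow> sum f S \<in> polys_in n"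
proof (induction S rule: infinite_finite_induct)
  case (insert x F)
  then show ?case by (simp add: polys_in_add)
qed (simp_all add: polys_in_def)

lemma polys_in_single: "Poly_Mapping.keys mo \<subseteq> {..<n} \<Longrightarrow> Poly_Mapping.single mo c \<in> polys_in n"
  by (simp add: polys_in_def)

lemma lookup_const_poly_mult:
  "Poly_Mapping.lookup (const_poly c * p) mo = c * Poly_Mapping.lookup p mo"
  unfolding const_poly_def mult_map_scale_conv_mult[symmetric]
  by (simp add: Poly_Mapping.map.rep_eq when_def)

lemma size_mset_eq_sum_count:
  assumes "finite S" "set_mset M \<subseteq> S"
  shows "size M = (\<Sum>i\<in>S. count M i)"
  unfolding size_multiset_overloaded_eq using assms
  by (intro sum.mono_neutral_left) (auto, metis count_inI)

definition mons_le :: "nat \<Rightarrow> nat \<Rightarrow> (nat \<Rightarrow>\<^sub>0 nat) set" where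
  "mons_le n k = {mo. Poly_Mapping.keys mo \<subseteq> {..<n} \<and> mon_deg mo \<le> k}"

text \<open>A monomial x^\<alpha> of degree at most k in x_0, ..., x_(n-1) is identified with the monomial
  x^\<alpha> x_n^(k - |\<alpha>|) of degree exactly k, i.e. with a multiset of size k over {0..n}.\<close>

definition homogenize_mset :: "nat \<Rightarrow> nat \<Rightarrow> (nat \<Rightarrow>\<^sub>0 nat) \<Rightarrow> nat multiset" where
  "homogenize_mset n k mo =
     (\<Sum>i<n. replicate_mset (Poly_Mapping.lookup mo i) i) + replicate_mset (k - mon_deg mo) n"

lemma count_homogenize_mset:
  "count (homogenize_mset n k mo) j =
     (if j < n then Poly_Mapping.lookup mo j else if j = n then k - mon_deg mo else 0)"
  by (auto simp: homogenize_mset_def count_sum)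

lemma size_homogenize_mset:
  assumes "mo \<in> mons_le n k"
  shows "size (homogenize_mset n k mo) = k"
proof -
  have "mon_deg mo = (\<Sum>i<n. Poly_Mapping.lookup mo i)" "mon_deg mo \<le> k"
    using assms mon_deg_eq_sum[of "{..<n}" mo] by (auto simp: mons_le_def)
  then show ?thesis by (simp add: homogenize_mset_def)
qed

definition dehomogenize_mset :: "nat \<Rightarrow> nat multiset \<Rightarrow> (nat \<Rightarrow>\<^sub>0 nat)" where
  "dehomogenize_mset n M = Abs_poly_mapping (\<lambda>i. if i < n then count M i else 0)"

lemma lookup_dehomogenize_mset:
  "Poly_Mapping.lookup (dehomogenize_mset n M) i = (if i < n then count M i else 0)"
proof -
  have "finite {i. (if i < n then count M i else 0) \<noteq> 0}"
    by (rule finite_subset[of _ "{..<n}"]) auto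
  then show ?thesis by (simp add: dehomogenize_mset_def)
qed

lemma keys_dehomogenize_mset: "Poly_Mapping.keys (dehomogenize_mset n M) \<subseteq> {..<n}"
  by (auto simp: in_keys_iff lookup_dehomogenize_mset split: if_splits)

lemma mon_deg_dehomogenize_mset:
  assumes "set_mset M \<subseteq> {..n}"
  shows "mon_deg (dehomogenize_mset n M) + count M n = size M"
  using size_mset_eq_sum_count[OF _ assms] mon_deg_eq_sum[OF _ keys_dehomogenize_mset]
  by (simp add: lookup_dehomogenize_mset lessThan_Suc_atMost[symmetric])

lemma dehomogenize_homogenize_mset:
  assumes "mo \<in> mons_le n k"
  shows "dehomogenize_mset n (homogenize_mset n k mo) = mo"
  using assms
  by (auto simp: mons_le_def count_homogenize_mset lookup_dehomogenize_mset in_keys_iff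
      intro!: poly_mapping_eqI)

lemma homogenize_dehomogenize_mset:
  assumes "M \<in> multisets_of_size {..n} k"
  shows "homogenize_mset n k (dehomogenize_mset n M) = M"
proof (rule multiset_eqI)
  fix j
  have M: "set_mset M \<subseteq> {..n}" "size M = k"
    using assms by (simp_all add: multisets_of_size_def)
  consider "j < n" | "j = n" | "j > n" by linarith
  then show "count (homogenize_mset n k (dehomogenize_mset n M)) j = count M j"
  proof cases
    case 1
    then show ?thesis by (simp add: count_homogenize_mset lookup_dehomogenize_mset)
  next
    case 2
    then show ?thesis
      using mon_deg_dehomogenize_mset[OF M(1)] M(2) by (simp add: count_homogenize_mset)
  next
    case 3
    then have "count M j = 0" using M(1) by (metis atMost_iff count_inI leD subsetD)
    then show ?thesis using 3 by (simp add: count_homogenize_mset)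
  qed
qed

lemma bij_betw_mons_le_multisets_of_size:
  "bij_betw (homogenize_mset n k) (mons_le n k) (multisets_of_size {..n} k)"
proof (rule bij_betw_byWitness[where f' = "dehomogenize_mset n"])
  show "\<forall>mo\<in>mons_le n k. dehomogenize_mset n (homogenize_mset n k mo) = mo"
    by (simp add: dehomogenize_homogenize_mset)
  show "\<forall>M\<in>multisets_of_size {..n} k. homogenize_mset n k (dehomogenize_mset n M) = M"
    by (simp add: homogenize_dehomogenize_mset)
  show "homogenize_mset n k ` mons_le n k \<subseteq> multisets_of_size {..n} k"
  proof (clarsimp simp: multisets_of_size_def size_homogenize_mset)
    fix mo j assume "j \<in># homogenize_mset n k mo"
    then have "count (homogenize_mset n k mo) j \<noteq> 0" by simp
    then show "j \<le> n" by (simp add: count_homogenize_mset split: if_splits)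
  qed
  show "dehomogenize_mset n ` multisets_of_size {..n} k \<subseteq> mons_le n k"
  proof (rule image_subsetI)
    fix M assume "M \<in> multisets_of_size {..n} k"
    then have "mon_deg (dehomogenize_mset n M) \<le> k"
      using mon_deg_dehomogenize_mset[of M n] by (simp add: multisets_of_size_def)
    then show "dehomogenize_mset n M \<in> mons_le n k"
      using keys_dehomogenize_mset by (simp add: mons_le_def)
  qed
qed

lemma card_mons_le: "card (mons_le n k) = (k + n) choose n"
proof -
  have "card (mons_le n k) = card (multisets_of_size {..n} k)"
    by (rule bij_betw_same_card[OF bij_betw_mons_le_multisets_of_size])
  also have "\<dots> = (n + k) choose k"
    by (simp add: card_multisets_of_size)
  finally show ?thesis
    using binomial_symmetric[of k "n + k"] by (simp add: add.commute)
qed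

lemma finite_mons_le: "finite (mons_le n k)"
  by (simp add: bij_betw_finite[OF bij_betw_mons_le_multisets_of_size] finite_multisets_of_size)

lemma keys_subset_mons_le:
  assumes "p \<in> polys_le n k"
  shows "Poly_Mapping.keys p \<subseteq> mons_le n k"
proof
  fix mo assume "mo \<in> Poly_Mapping.keys p"
  moreover have "tdeg p \<le> k" "p \<in> polys_in n"
    using assms by (simp_all add: polys_le_def)
  ultimately show "mo \<in> mons_le n k"
    unfolding mons_le_def polys_in_def tdeg_le_iff by blast
qed

lemma lookup_sum_single:
  assumes "finite A" "x \<in> A"
  shows "Poly_Mapping.lookup (\<Sum>y\<in>A. Poly_Mapping.single y (f y)) x = f x"
  using assms by (simp add: lookup_sum lookup_single when_def)

lemma sum_single_in_polys_le: "(\<Sum>mo\<in>mons_le n k. Poly_Mapping.single mo (f mo)) \<in> polys_le n k"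
proof -
  have "Poly_Mapping.keys (\<Sum>mo\<in>mons_le n k. Poly_Mapping.single mo (f mo)) \<subseteq> mons_le n k"
    using keys_sum[of "\<lambda>mo. Poly_Mapping.single mo (f mo)" "mons_le n k"] by auto
  then show ?thesis
    by (auto simp: polys_le_def polys_in_def tdeg_le_iff mons_le_def)
qed

text \<open>One step of Gaussian elimination: c' solves the system obtained by eliminating the
  unknown u0 with equation e.\<close>

lemma homogeneous_system_extend_solution:
  fixes A :: "'e \<Rightarrow> 'u \<Rightarrow> 'a::field"
  assumes "finite U" "u0 \<in> U" "A e u0 \<noteq> 0"
    and nontrivial: "\<exists>u\<in>U - {u0}. c' u \<noteq> 0"
    and reduced: "\<forall>x\<in>E. (\<Sum>u\<in>U - {u0}. (A x u - A x u0 * A e u / A e u0) * c' u) = 0"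
  shows "\<exists>c. (\<exists>u\<in>U. c u \<noteq> 0) \<and> (\<forall>x\<in>insert e E. (\<Sum>u\<in>U. A x u * c u) = 0)"
proof -
  define S where "S = (\<Sum>u\<in>U - {u0}. A e u * c' u)"
  define c where "c = c'(u0 := - S / A e u0)"
  have split: "(\<Sum>u\<in>U. A x u * c u) = A x u0 * c u0 + (\<Sum>u\<in>U - {u0}. A x u * c' u)" for x
  proof -
    have "(\<Sum>u\<in>U. A x u * c u) = A x u0 * c u0 + (\<Sum>u\<in>U - {u0}. A x u * c u)"
      using assms(1,2) by (rule sum.remove)
    also have "(\<Sum>u\<in>U - {u0}. A x u * c u) = (\<Sum>u\<in>U - {u0}. A x u * c' u)"
      by (rule sum.cong) (auto simp: c_def)
    finally show ?thesis .
  qed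
  have "(\<Sum>u\<in>U. A x u * c u) = 0" if "x \<in> insert e E" for x
  proof (cases "x = e")
    case True
    have "A e u0 * c u0 = - S"
      using assms(3) by (simp add: c_def)
    then show ?thesis
      using True split[of e] by (simp add: S_def)
  next
    case False
    have "(A x u - A x u0 * A e u / A e u0) * c' u
        = A x u * c' u - A x u0 / A e u0 * (A e u * c' u)" for u
      by (simp add: left_diff_distrib)
    then have "(\<Sum>u\<in>U - {u0}. (A x u - A x u0 * A e u / A e u0) * c' u)
        = (\<Sum>u\<in>U - {u0}. A x u * c' u) - A x u0 / A e u0 * S"
      by (simp add: S_def sum_subtractf sum_distrib_left)
    then have "(\<Sum>u\<in>U - {u0}. A x u * c' u) = A x u0 / A e u0 * S"
      using reduced that False by simp
    then show ?thesis using split[of x] by (simp add: c_def)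
  qed
  moreover have "\<exists>u\<in>U. c u \<noteq> 0" using nontrivial by (auto simp: c_def)
  ultimately show ?thesis by blast
qed

lemma homogeneous_system_nontrivial_solution:
  fixes A :: "'e \<Rightarrow> 'u \<Rightarrow> 'a::field"
  assumes "finite E" "finite U" "card E < card U"
  shows "\<exists>c. (\<exists>u\<in>U. c u \<noteq> 0) \<and> (\<forall>e\<in>E. (\<Sum>u\<in>U. A e u * c u) = 0)"
  using assms
proof (induction E arbitrary: U A rule: finite_induct)
  case empty
  then obtain u where "u \<in> U" by fastforce
  then show ?case by (intro exI[of _ "\<lambda>v. if v = u then 1 else 0"]) auto
next
  case (insert e E U A)
  show ?case
  proof (cases "\<forall>u\<in>U. A e u = 0")
    case True
    with insert.IH[of U A] insert.prems insert.hyps show ?thesis by auto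
  next
    case False
    then obtain u0 where u0: "u0 \<in> U" "A e u0 \<noteq> 0" by blast
    have "finite (U - {u0})" "card E < card (U - {u0})"
      using insert.prems insert.hyps u0 by auto
    then obtain c' where "\<exists>u\<in>U - {u0}. c' u \<noteq> 0"
      "\<forall>x\<in>E. (\<Sum>u\<in>U - {u0}. (A x u - A x u0 * A e u / A e u0) * c' u) = 0"
      using insert.IH[of "U - {u0}" "\<lambda>x u. A x u - A x u0 * A e u / A e u0"] by blast
    then show ?thesis
      by (rule homogeneous_system_extend_solution[where A = A and e = e, OF insert.prems(1) u0])
  qed
qed

lemma mpoly_linear_dependence:
  fixes v :: "'u \<Rightarrow> ('a::field) mpoly"
  assumes "finite U" "finite E" "card E < card U"
    and keys_v: "\<And>u. u \<in> U \<Longrightarrow> Poly_Mapping.keys (v u) \<subseteq> E"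
  obtains c where "\<exists>u\<in>U. c u \<noteq> 0" "(\<Sum>u\<in>U. const_poly (c u) * v u) = 0"
proof -
  obtain c where c: "\<exists>u\<in>U. c u \<noteq> 0"
    "\<forall>e\<in>E. (\<Sum>u\<in>U. Poly_Mapping.lookup (v u) e * c u) = 0"
    using homogeneous_system_nontrivial_solution[OF assms(2,1,3),
        of "\<lambda>e u. Poly_Mapping.lookup (v u) e"] by blast
  have "(\<Sum>u\<in>U. const_poly (c u) * v u) = 0"
  proof (rule poly_mapping_eqI)
    fix e
    have "Poly_Mapping.lookup (\<Sum>u\<in>U. const_poly (c u) * v u) e
        = (\<Sum>u\<in>U. Poly_Mapping.lookup (v u) e * c u)"
      unfolding lookup_sum lookup_const_poly_mult by (simp only: mult.commute)
    also have "\<dots> = 0"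
    proof (cases "e \<in> E")
      case True
      then show ?thesis using c(2) by blast
    next
      case False
      then have "Poly_Mapping.lookup (v u) e = 0" if "u \<in> U" for u
        using keys_v[OF that] by (auto simp: in_keys_iff)
      then show ?thesis by simp
    qed
    finally show "Poly_Mapping.lookup (\<Sum>u\<in>U. const_poly (c u) * v u) e = Poly_Mapping.lookup 0 e"
      by simp
  qed
  with c(1) show thesis by (rule that)
qed

context
  fixes n :: nat and \<phi> :: "('a::field) mpoly \<Rightarrow> 'a mpoly"
  assumes endo: "is_alg_endo n \<phi>"
begin

lemma endo_polys_in: "p \<in> polys_in n \<Longrightarrow> \<phi> p \<in> polys_in n"
  using endo by (simp add: is_alg_endo_def)

lemma endo_add: "p \<in> polys_in n \<Longrightarrow> q \<in> polys_in n \<Longrightarrow> \<phi> (p + q) = \<phi> p + \<phi> q"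
  using endo by (simp add: is_alg_endo_def)

lemma endo_mult: "p \<in> polys_in n \<Longrightarrow> q \<in> polys_in n \<Longrightarrow> \<phi> (p * q) = \<phi> p * \<phi> q"
  using endo by (simp add: is_alg_endo_def)

lemma endo_const_poly: "\<phi> (const_poly c) = const_poly c"
  using endo by (simp add: is_alg_endo_def)

lemma endo_sum: "(\<And>x. x \<in> S \<Longrightarrow> f x \<in> polys_in n) \<Longrightarrow> \<phi> (sum f S) = (\<Sum>x\<in>S. \<phi> (f x))"
proof (induction S rule: infinite_finite_induct)
  case (insert x F)
  then show ?case by (simp add: endo_add polys_in_sum)
qed (use endo_const_poly[of 0] in \<open>simp_all add: const_poly_def\<close>)

lemma endo_single:
  assumes "Poly_Mapping.keys mo \<subseteq> {..<n}"
  shows "\<phi> (Poly_Mapping.single mo c) = const_poly c * \<phi> (Poly_Mapping.single mo 1)"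
proof -
  have "Poly_Mapping.single mo c = const_poly c * Poly_Mapping.single mo 1"
    by (simp add: const_poly_def mult_single)
  moreover have "const_poly c \<in> polys_in n"
    by (simp add: polys_in_def const_poly_def)
  ultimately show ?thesis
    using assms by (simp add: endo_mult polys_in_single endo_const_poly)
qed

lemma tdeg_endo_monomial_le:
  "Poly_Mapping.keys mo \<subseteq> {..<n} \<Longrightarrow>
     tdeg (\<phi> (Poly_Mapping.single mo 1)) \<le> endo_deg n \<phi> * mon_deg mo"
proof (induction mo rule: monomial_induct)
  case zero
  have "\<phi> 1 = 1"
    using endo_const_poly[of 1] by (simp add: const_poly_def)
  then show ?case
    by (simp add: tdeg_def keys_one mon_deg_def)
next
  case (add_var mo i)
  have keys: "Poly_Mapping.keys mo \<subseteq> {..<n}" "i < n"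
    using add_var.prems by (auto simp: in_keys_iff lookup_add subset_iff)
  have "Poly_Mapping.single (mo + Poly_Mapping.single i 1) (1::'a)
      = Poly_Mapping.single mo 1 * Var i"
    by (simp add: Var_def mult_single)
  then have "\<phi> (Poly_Mapping.single (mo + Poly_Mapping.single i 1) 1)
      = \<phi> (Poly_Mapping.single mo 1) * \<phi> (Var i)"
    using keys by (simp add: endo_mult polys_in_single Var_def)
  moreover have "tdeg (\<phi> (Var i)) \<le> endo_deg n \<phi>"
    unfolding endo_deg_def using keys(2) by (intro Max_ge) auto
  ultimately show ?case
    using add_var.IH[OF keys(1)] tdeg_mult_le[of "\<phi> (Poly_Mapping.single mo 1)" "\<phi> (Var i)"]
    by (simp add: mon_deg_add mon_deg_single)
qed

lemma endo_sum_single: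
  assumes "\<And>mo. mo \<in> A \<Longrightarrow> Poly_Mapping.keys mo \<subseteq> {..<n}"
  shows "\<phi> (\<Sum>mo\<in>A. Poly_Mapping.single mo (f mo))
    = (\<Sum>mo\<in>A. const_poly (f mo) * \<phi> (Poly_Mapping.single mo 1))"
proof -
  have "\<phi> (\<Sum>mo\<in>A. Poly_Mapping.single mo (f mo)) = (\<Sum>mo\<in>A. \<phi> (Poly_Mapping.single mo (f mo)))"
    using assms by (intro endo_sum polys_in_single)
  also have "\<dots> = (\<Sum>mo\<in>A. const_poly (f mo) * \<phi> (Poly_Mapping.single mo 1))"
    using assms by (intro sum.cong refl endo_single)
  finally show ?thesis .
qed

lemma endo_monomial_mult_in_polys_le:
  assumes "mo \<in> mons_le n m" "q \<in> polys_le n d"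
  shows "\<phi> (Poly_Mapping.single mo 1) * q \<in> polys_le n (endo_deg n \<phi> * m + d)"
proof -
  have mo: "Poly_Mapping.keys mo \<subseteq> {..<n}" "mon_deg mo \<le> m"
    using assms(1) by (simp_all add: mons_le_def)
  have q: "q \<in> polys_in n" "tdeg q \<le> d"
    using assms(2) by (simp_all add: polys_le_def)
  have "tdeg (\<phi> (Poly_Mapping.single mo 1) * q) \<le> endo_deg n \<phi> * mon_deg mo + d"
    using tdeg_mult_le[of "\<phi> (Poly_Mapping.single mo 1)" q] tdeg_endo_monomial_le[OF mo(1)] q(2)
    by linarith
  also have "\<dots> \<le> endo_deg n \<phi> * m + d"
    using mo(2) by simp
  finally show ?thesis
    using polys_in_mult[OF endo_polys_in[OF polys_in_single[OF mo(1)]] q(1)]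
    by (simp add: polys_le_def)
qed

lemma card_mons_le_le_of_no_relation:
  fixes h :: "nat \<Rightarrow> 'a mpoly"
  assumes h: "\<forall>i<r. h i \<in> polys_le n d"
    and no_relation: "\<forall>b :: nat \<Rightarrow> 'a mpoly.
           (\<forall>i<r. b i \<in> polys_le n m) \<and> (\<Sum>i<r. \<phi> (b i) * h i) = 0
           \<longrightarrow> (\<forall>i<r. b i = 0)"
  shows "r * card (mons_le n m) \<le> card (mons_le n (endo_deg n \<phi> * m + d))"
proof (rule ccontr)
  let ?N = "endo_deg n \<phi> * m + d"
  let ?U = "{..<r} \<times> mons_le n m"
  define v where "v = (\<lambda>(i, mo). \<phi> (Poly_Mapping.single mo 1) * h i)"
  assume "\<not> ?thesis"
  then have card_lt: "card (mons_le n ?N) < card ?U"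
    by (simp add: card_cartesian_product)
  have keys_v: "Poly_Mapping.keys (v u) \<subseteq> mons_le n ?N" if "u \<in> ?U" for u
    using that h by (auto simp: v_def intro!: keys_subset_mons_le endo_monomial_mult_in_polys_le)
  have "finite ?U" by (simp add: finite_mons_le)
  then obtain c where c: "\<exists>u\<in>?U. c u \<noteq> 0" "(\<Sum>u\<in>?U. const_poly (c u) * v u) = 0"
    by (rule mpoly_linear_dependence[OF _ finite_mons_le card_lt keys_v])
  define b where "b i = (\<Sum>mo\<in>mons_le n m. Poly_Mapping.single mo (c (i, mo)))" for i
  have endo_b: "\<phi> (b i) = (\<Sum>mo\<in>mons_le n m. const_poly (c (i, mo)) * \<phi> (Poly_Mapping.single mo 1))"
    for i
    unfolding b_def by (rule endo_sum_single) (simp add: mons_le_def)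
  have "(\<Sum>i<r. \<phi> (b i) * h i) = (\<Sum>i<r. \<Sum>mo\<in>mons_le n m. const_poly (c (i, mo)) * v (i, mo))"
    unfolding endo_b sum_distrib_right v_def by (simp add: mult.assoc)
  also have "\<dots> = 0"
    using c(2) by (simp add: sum.cartesian_product)
  finally have "\<forall>i<r. b i = 0"
    using no_relation[THEN spec, of b] by (simp add: b_def sum_single_in_polys_le)
  then have "c (i, mo) = 0" if "i < r" "mo \<in> mons_le n m" for i mo
    using lookup_sum_single[OF finite_mons_le that(2), of "\<lambda>mo. c (i, mo)"] that
    by (simp add: b_def)
  with c(1) show False by blast
qed

end

lemma choose_mult_power_le: "((N + n) choose n) * m ^ n \<le> ((m + n) choose n) * (N + n) ^ n"
proof (induction n)
  case 0
  show ?case by simp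
next
  case (Suc n)
  have "((N + Suc n) choose Suc n) * m ^ Suc n * Suc n
      = m * m ^ n * (((N + Suc n) choose Suc n) * Suc n)"
    by (simp only: power_Suc ac_simps)
  also have "\<dots> = m * m ^ n * (Suc (N + n) * ((N + n) choose n))"
    by (simp only: add_Suc_right Suc_times_binomial_eq)
  also have "\<dots> = (Suc (N + n) * m) * (((N + n) choose n) * m ^ n)"
    by (simp only: ac_simps)
  also have "\<dots> \<le> (Suc (N + n) * Suc (m + n)) * (((m + n) choose n) * Suc (N + n) ^ n)"
  proof (rule mult_mono)
    have "(N + n) ^ n \<le> Suc (N + n) ^ n" by (simp add: power_mono)
    then show "((N + n) choose n) * m ^ n \<le> ((m + n) choose n) * Suc (N + n) ^ n"
      using Suc.IH order_trans mult_le_mono2 by blast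
    show "Suc (N + n) * m \<le> Suc (N + n) * Suc (m + n)"
      by (rule mult_le_mono2) simp
  qed simp_all
  also have "\<dots> = (Suc (m + n) * ((m + n) choose n)) * (Suc (N + n) * Suc (N + n) ^ n)"
    by (simp only: ac_simps)
  also have "\<dots> = ((m + Suc n) choose Suc n) * (N + Suc n) ^ Suc n * Suc n"
    by (simp only: Suc_times_binomial_eq add_Suc_right power_Suc ac_simps)
  finally show ?case
    by (metis mult_le_cancel2 zero_less_Suc)
qed

lemma power_add_le:
  fixes D s :: real
  assumes "1 \<le> D" "0 \<le> s" "s \<le> 1" "1 \<le> n"
  shows "(D + s) ^ n \<le> D ^ n + s * D ^ (n - 1) * (2 ^ n - 1)"
  using assms(4)
proof (induction n rule: dec_induct)
  case base
  then show ?case by simp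
next
  case (step k)
  have Dk: "D ^ k = D * D ^ (k - 1)"
    using step.hyps by (cases k) auto
  have "s * s * D ^ (k - 1) \<le> s * D ^ k"
    using assms by (intro mult_mono) (auto simp: mult_left_le power_increasing)
  then have small: "s * s * D ^ (k - 1) * (2 ^ k - 1) \<le> s * D ^ k * (2 ^ k - 1)"
    by (intro mult_right_mono) auto
  have "(D + s) ^ Suc k = (D + s) * (D + s) ^ k"
    by simp
  also have "\<dots> \<le> (D + s) * (D ^ k + s * D ^ (k - 1) * (2 ^ k - 1))"
    using step.IH assms by (intro mult_left_mono) auto
  also have "\<dots> = D ^ Suc k + s * D ^ k + s * D ^ k * (2 ^ k - 1)
      + s * s * D ^ (k - 1) * (2 ^ k - 1)"
    by (simp add: algebra_simps Dk)
  also have "\<dots> \<le> D ^ Suc k + s * D ^ (Suc k - 1) * (2 ^ Suc k - 1)"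
    using small by (simp add: algebra_simps)
  finally show ?case .
qed

lemma degree_bound_of_counting_bound:
  fixes r m n d D :: nat
  assumes "n > 0" "r > 0" "m > n + d" "r * m ^ n \<le> (D * m + d + n) ^ n"
  shows "int m * (int r - int D ^ n) < 2 ^ n * int D ^ (n - 1) * int (n + d)"
proof -
  define s :: real where "s = (n + d) / m"
  have m: "real m > 0" using assms(3) by simp
  have s: "0 \<le> s" "s < 1" using assms(3) m by (auto simp: s_def field_simps)
  have "real r * real m ^ n \<le> (real D * m + d + n) ^ n"
    using assms(4) by (metis of_nat_le_iff of_nat_add of_nat_mult of_nat_power)
  also have "real D * m + d + n = (D + s) * m"
    using m by (simp add: s_def field_simps)
  finally have r_le: "real r \<le> (D + s) ^ n"
    using m by (simp add: power_mult_distrib)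
  show ?thesis
  proof (cases "D = 0")
    case True
    have "s ^ n < 1" using s assms(1) by (simp add: power_less_one_iff)
    then show ?thesis using r_le True assms(2) by simp
  next
    case False
    then have "real r \<le> real D ^ n + s * real D ^ (n - 1) * (2 ^ n - 1)"
      using r_le power_add_le[of D s n] s assms(1) by simp
    then have "real m * real r \<le> real m * real D ^ n + (n + d) * real D ^ (n - 1) * (2 ^ n - 1)"
      using m by (simp add: s_def field_simps)
    moreover have "real (n + d) * real D ^ (n - 1) > 0"
      using False assms(1) by simp
    ultimately have "real m * (real r - real D ^ n) < 2 ^ n * real D ^ (n - 1) * real (n + d)"
      by (simp add: algebra_simps)
    then have "real_of_int (int m * (int r - int D ^ n))
        < real_of_int (2 ^ n * int D ^ (n - 1) * int (n + d))"
      by simp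
    then show ?thesis
      by (simp only: of_int_less_iff)
  qed
qed

theorem lemma4p1:
  fixes \<phi> :: "('a::field) mpoly \<Rightarrow> 'a mpoly"
    and n d r m :: nat
    and h :: "nat \<Rightarrow> 'a mpoly"
  assumes "n > 0"
    and "is_alg_endo n \<phi>"
    and "r > 0"
    and "\<forall>i<r. h i \<in> polys_le n d"
    and "m > n + d"
    and "\<forall>b :: nat \<Rightarrow> 'a mpoly.
           (\<forall>i<r. b i \<in> polys_le n m) \<and> (\<Sum>i<r. \<phi> (b i) * h i) = 0
           \<longrightarrow> (\<forall>i<r. b i = 0)"
  shows "int m * (int r - int (endo_deg n \<phi>) ^ n)
           < 2 ^ n * int (endo_deg n \<phi>) ^ (n - 1) * int (n + d)"
proof -
  let ?N = "endo_deg n \<phi> * m + d"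
  have "r * ((m + n) choose n) \<le> (?N + n) choose n"
    using card_mons_le_le_of_no_relation[OF assms(2,4,6)] by (simp add: card_mons_le)
  then have "r * ((m + n) choose n) * m ^ n \<le> ((?N + n) choose n) * m ^ n"
    by (rule mult_right_mono) simp
  also have "\<dots> \<le> ((m + n) choose n) * (?N + n) ^ n"
    by (rule choose_mult_power_le)
  finally have "r * m ^ n \<le> (?N + n) ^ n"
    by (simp add: ac_simps)
  then show ?thesis
    using degree_bound_of_counting_bound assms(1,3,5) by (simp add: add.assoc)
qed

end
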